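(* Let $n=2$, let $O_1=\{p\in M: v_1(p)\ge v_2(p)\}$, $O_2=\{q\in M: v_1(q)<v_2(q)\}$, and assume that in the allocation $(O_1,O_2)$ agent 2 strongly envies agent 1. Let $\mathrm{OPT}$ be the maximum social welfare $v_1(A_1)+v_2(A_2)$ over all EF1 allocations $(A_1,A_2)$, and let $\mathrm{OPT}(C_2)$ be the maximum social welfare over all allocations in which agent 2 does not strongly envy agent 1. Then $\mathrm{OPT}=\mathrm{OPT}(C_2)$.
   Context: Two agents with additive valuations $v_1,v_2:2^M\to\mathbb{R}_{\ge0}$ over items $M=[m]$; an allocation $(A_1,A_2)$ is a partition of $M$. Agent $i$ strongly envies agent $j$ if $A_j\ne\emptyset$ and $v_i(A_i)<v_i(A_j\setminus\{g\})$ for every $g\in A_j$. An allocation is EF1 if neither agent strongly envies the other (an agent never strongly envies an empty bundle). *)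

theory Defs
  imports Complex_Main
begin

text \<open>Additive valuations are given by
  per-item values u1 u2 :: 'a => real (nonnegative); the value of a bundle S
  is sum u S.\<close>

definition strongly_envies :: "('a \<Rightarrow> real) \<Rightarrow> 'a set \<Rightarrow> 'a set \<Rightarrow> bool" where
  "strongly_envies u Ai Aj \<longleftrightarrow> Aj \<noteq> {} \<and> (\<forall>g\<in>Aj. sum u Ai < sum u (Aj - {g}))"

definition allocations :: "'a set \<Rightarrow> ('a set \<times> 'a set) set" where
  "allocations M = {(A1, A2). A1 \<union> A2 = M \<and> A1 \<inter> A2 = {}}"

definition EF1 :: "('a \<Rightarrow> real) \<Rightarrow> ('a \<Rightarrow> real) \<Rightarrow> 'a set \<times> 'a set \<Rightarrow> bool" where
  "EF1 u1 u2 A \<longleftrightarrow> \<not> strongly_envies u1 (fst A) (snd A) \<and> \<not> strongly_envies u2 (snd A) (fst A)"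

definition welfare :: "('a \<Rightarrow> real) \<Rightarrow> ('a \<Rightarrow> real) \<Rightarrow> 'a set \<times> 'a set \<Rightarrow> real" where
  "welfare u1 u2 A = sum u1 (fst A) + sum u2 (snd A)"

definition OPT :: "'a set \<Rightarrow> ('a \<Rightarrow> real) \<Rightarrow> ('a \<Rightarrow> real) \<Rightarrow> real" where
  "OPT M u1 u2 = Max (welfare u1 u2 ` {A \<in> allocations M. EF1 u1 u2 A})"

definition OPT_C2 :: "'a set \<Rightarrow> ('a \<Rightarrow> real) \<Rightarrow> ('a \<Rightarrow> real) \<Rightarrow> real" where
  "OPT_C2 M u1 u2 = Max (welfare u1 u2 ` {A \<in> allocations M. \<not> strongly_envies u2 (snd A) (fst A)})"

end

theory Submission
  imports Defs
begin

text \<open>Among the allocations in which agent 2 does not strongly envy agent 1, take one of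
  maximum welfare and, among those, one giving agent 1 as many items as possible; it is EF1.
  Otherwise agent 1 strongly envies agent 2. Agent 2's bundle then contains an item g with
  v1 g \<ge> v2 g, for else the allocation would be sandwiched between (O1, O2) and agent 2 would
  strongly envy agent 1 exactly as in (O1, O2). Moving g to agent 1 does not lower welfare,
  so by the maximality of agent 1's bundle agent 2 must strongly envy after the move; but
  then swapping the two original bundles gives an allocation of strictly larger welfare in
  which agent 2 does not strongly envy, a contradiction.\<close>

lemma strongly_envies_mono:
  fixes u :: "'a \<Rightarrow> real"
  assumes envy: "strongly_envies u Ai Aj"
    and "Ai' \<subseteq> Ai" "Aj \<subseteq> Aj'" "finite Ai" "finite Aj'"
    and nonneg: "\<forall>x\<in>Ai \<union> Aj'. u x \<ge> 0"
  shows "strongly_envies u Ai' Aj'"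
  unfolding strongly_envies_def
proof (intro conjI ballI)
  from envy obtain g0 where "g0 \<in> Aj" and less: "\<forall>h\<in>Aj. sum u Ai < sum u (Aj - {h})"
    unfolding strongly_envies_def by auto
  then show "Aj' \<noteq> {}" using \<open>Aj \<subseteq> Aj'\<close> by auto
  fix g assume "g \<in> Aj'"
  obtain h where "h \<in> Aj" and "Aj - {h} \<subseteq> Aj' - {g}"
    using \<open>g0 \<in> Aj\<close> \<open>Aj \<subseteq> Aj'\<close> by (cases "g \<in> Aj") auto
  have "sum u Ai' \<le> sum u Ai"
    using assms by (intro sum_mono2) auto
  also have "\<dots> < sum u (Aj - {h})"
    using less \<open>h \<in> Aj\<close> by blast
  also have "\<dots> \<le> sum u (Aj' - {g})"
    using \<open>Aj - {h} \<subseteq> Aj' - {g}\<close> assms by (intro sum_mono2) auto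
  finally show "sum u Ai' < sum u (Aj' - {g})" .
qed

lemma finite_allocations:
  assumes "finite M"
  shows "finite (allocations M)"
proof (rule finite_subset)
  show "allocations M \<subseteq> Pow M \<times> Pow M"
    unfolding allocations_def by auto
qed (use assms in auto)

lemma ex_item_valued_more_by_agent1:
  fixes v1 v2 :: "'a \<Rightarrow> real"
  assumes "finite M" and nonneg2: "\<forall>p\<in>M. v2 p \<ge> 0"
    and envy: "strongly_envies v2 {q\<in>M. v1 q < v2 q} {p\<in>M. v1 p \<ge> v2 p}"
    and A: "(A1, A2) \<in> allocations M" "\<not> strongly_envies v2 A2 A1"
  shows "\<exists>g\<in>A2. v1 g \<ge> v2 g"
proof (rule ccontr)
  assume "\<not> (\<exists>g\<in>A2. v1 g \<ge> v2 g)"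
  then have "A2 \<subseteq> {q\<in>M. v1 q < v2 q}" "{p\<in>M. v1 p \<ge> v2 p} \<subseteq> A1"
    using A unfolding allocations_def by auto
  then have "strongly_envies v2 A2 A1"
    using A \<open>finite M\<close> nonneg2 unfolding allocations_def
    by (intro strongly_envies_mono[OF envy]) auto
  with A show False by simp
qed

lemma welfare_move_item:
  assumes "finite A1" "finite A2" "g \<in> A2" "g \<notin> A1"
  shows "welfare v1 v2 (insert g A1, A2 - {g}) = welfare v1 v2 (A1, A2) + v1 g - v2 g"
  using assms by (simp add: welfare_def sum_diff1)

lemma swap_improves_if_move_creates_envy:
  fixes v1 v2 :: "'a \<Rightarrow> real"
  assumes "finite A2" "g \<in> A2" "g \<notin> A1" "v1 g \<ge> v2 g"
    and envy1: "strongly_envies v1 A1 A2"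
    and envy2: "strongly_envies v2 (A2 - {g}) (insert g A1)"
  shows "\<not> strongly_envies v2 A1 A2" "welfare v1 v2 (A1, A2) < welfare v1 v2 (A2, A1)"
proof -
  have "insert g A1 - {g} = A1"
    using \<open>g \<notin> A1\<close> by auto
  then have "sum v2 (A2 - {g}) < sum v2 A1"
    using envy2 unfolding strongly_envies_def by auto
  then show "\<not> strongly_envies v2 A1 A2"
    using \<open>g \<in> A2\<close> unfolding strongly_envies_def by force
  have "sum v1 A1 < sum v1 (A2 - {g})"
    using envy1 \<open>g \<in> A2\<close> unfolding strongly_envies_def by auto
  with \<open>sum v2 (A2 - {g}) < sum v2 A1\<close> assms(1-4)
  show "welfare v1 v2 (A1, A2) < welfare v1 v2 (A2, A1)"
    by (simp add: welfare_def sum_diff1)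
qed

lemma EF1_if_lex_maximal:
  fixes v1 v2 :: "'a \<Rightarrow> real"
  assumes "finite M" and nonneg2: "\<forall>p\<in>M. v2 p \<ge> 0"
    and envy: "strongly_envies v2 {q\<in>M. v1 q < v2 q} {p\<in>M. v1 p \<ge> v2 p}"
    and A: "(A1, A2) \<in> allocations M" "\<not> strongly_envies v2 A2 A1"
    and max_welfare: "\<And>B. B \<in> allocations M \<Longrightarrow> \<not> strongly_envies v2 (snd B) (fst B) \<Longrightarrow>
      welfare v1 v2 B \<le> welfare v1 v2 (A1, A2)"
    and max_card: "\<And>B. B \<in> allocations M \<Longrightarrow> \<not> strongly_envies v2 (snd B) (fst B) \<Longrightarrow>
      welfare v1 v2 B = welfare v1 v2 (A1, A2) \<Longrightarrow> card (fst B) \<le> card A1"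
  shows "EF1 v1 v2 (A1, A2)"
proof -
  have fin: "finite A1" "finite A2" and part: "A1 \<union> A2 = M" "A1 \<inter> A2 = {}"
    using A \<open>finite M\<close> unfolding allocations_def by auto
  have "\<not> strongly_envies v1 A1 A2"
  proof
    assume envy1: "strongly_envies v1 A1 A2"
    obtain g where g: "g \<in> A2" "v1 g \<ge> v2 g"
      using ex_item_valued_more_by_agent1[OF \<open>finite M\<close> nonneg2 envy A] by blast
    then have "g \<notin> A1"
      using part by auto
    let ?B = "(insert g A1, A2 - {g})"
    have B_alloc: "?B \<in> allocations M"
      using part g unfolding allocations_def by auto
    show False
    proof (cases "strongly_envies v2 (A2 - {g}) (insert g A1)")
      case False
      have "welfare v1 v2 ?B \<ge> welfare v1 v2 (A1, A2)"
        using welfare_move_item[OF fin g(1) \<open>g \<notin> A1\<close>] g(2) by simp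
      then have "card (insert g A1) \<le> card A1"
        using max_card[OF B_alloc] max_welfare[OF B_alloc] False by fastforce
      with fin \<open>g \<notin> A1\<close> show False by simp
    next
      case True
      have swap_alloc: "(A2, A1) \<in> allocations M"
        using part unfolding allocations_def by auto
      from swap_improves_if_move_creates_envy[OF fin(2) g(1) \<open>g \<notin> A1\<close> g(2) envy1 True]
        max_welfare[OF swap_alloc]
      show False by fastforce
    qed
  qed
  with A show ?thesis
    unfolding EF1_def by simp
qed

lemma ex_lex_maximizer:
  fixes f :: "'a \<Rightarrow> 'b::linorder" and h :: "'a \<Rightarrow> 'c::linorder"
  assumes "finite S" "S \<noteq> {}"
  obtains x where "x \<in> S" "\<And>y. y \<in> S \<Longrightarrow> f y \<le> f x"
    "\<And>y. y \<in> S \<Longrightarrow> f y = f x \<Longrightarrow> h y \<le> h x"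
proof -
  define S' where "S' = {y \<in> S. f y = Max (f ` S)}"
  have "Max (f ` S) \<in> f ` S"
    using assms by (intro Max_in) auto
  then obtain y where "y \<in> S" "f y = Max (f ` S)"
    by (metis imageE)
  then have "finite S'" "S' \<noteq> {}"
    using assms unfolding S'_def by auto
  then have "Max (h ` S') \<in> h ` S'"
    by (intro Max_in) auto
  then obtain x where "x \<in> S'" "h x = Max (h ` S')"
    by (metis imageE)
  show ?thesis
  proof
    show "x \<in> S" "\<And>y. y \<in> S \<Longrightarrow> f y \<le> f x"
      using \<open>x \<in> S'\<close> assms unfolding S'_def by auto
    show "\<And>y. y \<in> S \<Longrightarrow> f y = f x \<Longrightarrow> h y \<le> h x"
      using \<open>x \<in> S'\<close> \<open>h x = Max (h ` S')\<close> \<open>finite S'\<close> unfolding S'_def by auto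
  qed
qed

lemma Max_image_eq_if_maximizer_in_subset:
  fixes f :: "'a \<Rightarrow> 'b::linorder"
  assumes "finite T" "S \<subseteq> T" "x \<in> S" "\<And>y. y \<in> T \<Longrightarrow> f y \<le> f x"
  shows "Max (f ` S) = Max (f ` T)"
proof -
  have "Max (f ` S) = f x" "Max (f ` T) = f x"
    using assms by (auto intro!: Max_eqI dest: finite_subset)
  then show ?thesis by simp
qed

theorem lemma1:
  fixes M :: "'a set" and v1 v2 :: "'a \<Rightarrow> real"
  assumes "finite M"
    and "\<forall>p\<in>M. v1 p \<ge> 0" and "\<forall>p\<in>M. v2 p \<ge> 0"
    and "O1 = {p\<in>M. v1 p \<ge> v2 p}" and "O2 = {q\<in>M. v1 q < v2 q}"
    and "strongly_envies v2 O2 O1"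
  shows "OPT M v1 v2 = OPT_C2 M v1 v2"
proof -
  define C where "C = {A \<in> allocations M. \<not> strongly_envies v2 (snd A) (fst A)}"
  have "finite C"
    using finite_allocations[OF \<open>finite M\<close>] unfolding C_def by simp
  moreover have "({}, M) \<in> C"
    unfolding C_def allocations_def strongly_envies_def by simp
  ultimately obtain A where "A \<in> C"
    and max_welfare: "\<And>B. B \<in> C \<Longrightarrow> welfare v1 v2 B \<le> welfare v1 v2 A"
    and max_card: "\<And>B. B \<in> C \<Longrightarrow> welfare v1 v2 B = welfare v1 v2 A \<Longrightarrow>
      card (fst B) \<le> card (fst A)"
    using ex_lex_maximizer[where f = "welfare v1 v2" and h = "\<lambda>A. card (fst A)"] by blast
  obtain A1 A2 where A: "A = (A1, A2)"
    by fastforce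
  have "EF1 v1 v2 (A1, A2)"
    using assms \<open>A \<in> C\<close> max_welfare max_card unfolding A
    by (intro EF1_if_lex_maximal[of M v2 v1]) (auto simp: C_def)
  then have "Max (welfare v1 v2 ` {A \<in> allocations M. EF1 v1 v2 A}) = Max (welfare v1 v2 ` C)"
    using \<open>finite C\<close> \<open>A \<in> C\<close> max_welfare A
    by (intro Max_image_eq_if_maximizer_in_subset) (auto simp: C_def EF1_def)
  then show ?thesis
    unfolding OPT_def OPT_C2_def C_def .
qed

end
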